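(* At the ice point $t=1$, $\Delta=1/2$, let $N\ge1$, $1\le s\le N$, and $r=N-s$. Define $$\mathcal J(z_1,\dots,z_s)=\prod_{j=1}^{s}\frac{z_j^{s-j}}{z_j^{s}(z_j-1)^{s-j+1}}\prod_{1\le j<k\le s}\frac{z_j-z_k}{1- z_k+z_jz_k}\;h_{N,s}(z_1,\dots,z_s).$$ Then the iterated residue at $z=0$ (taken first in $z_s$, ..., finally in $z_1$) is $$\operatorname*{res}_{z_1=0}\cdots\operatorname*{res}_{z_s=0}\mathcal J(z_1,\dots,z_s)=(-1)^s\,h_N(0)\,h_{N-1}(0)\cdots h_{N-s+1}(0).$$
   Context: At the ice point, for $N\ge1$, $h_N(z)={}_2F_1(-N+1,N;2N;1-z)=\sum_{r=1}^N H_N^{(r)}z^{r-1}$, where $H_N^{(r)}=\binom{N+r-2}{N-1}\binom{2N-1-r}{N-1}\big/\binom{3N-2}{N-1}$; it is a polynomial of degree $N-1$ with $h_N(1)=1$ and $z^{N-1}h_N(1/z)=h_N(z)$. For $1\le s\le N$, $$h_{N,s}(z_1,\dots,z_s)=\frac{\det\big[(z_j-1)^{s-i}z_j^{i-1}h_{N-i+1}(z_j)\big]_{i,j=1}^{s}}{\prod_{1\le i<j\le s}(z_i-z_j)}.$$ *)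

theory Defs
  imports "HOL-Complex_Analysis.Complex_Analysis" "Jordan_Normal_Form.Determinant"
begin

text \<open>Coefficients H_N^(r) at the ice point.\<close>
definition Hcoef :: "nat \<Rightarrow> nat \<Rightarrow> complex" where
  "Hcoef N r = of_nat ((N + r - 2) choose (N - 1)) * of_nat ((2*N - 1 - r) choose (N - 1))
               / of_nat ((3*N - 2) choose (N - 1))"

definition hN :: "nat \<Rightarrow> complex \<Rightarrow> complex" where
  "hN N z = (\<Sum>r = 1..N. Hcoef N r * z ^ (r - 1))"

text \<open>h_{N,s}(z_1,...,z_s); variables z 1, ..., z s (1-indexed). The matrix is
  0-indexed in Jordan_Normal_Form: entry (i,j) corresponds to row i+1, column j+1.\<close>
definition hNs :: "nat \<Rightarrow> nat \<Rightarrow> (nat \<Rightarrow> complex) \<Rightarrow> complex" where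
  "hNs N s z =
     det (mat s s (\<lambda>(i, j). (z (j+1) - 1) ^ (s - (i+1)) * z (j+1) ^ i * hN (N - i) (z (j+1))))
     / (\<Prod>i = 1..s. \<Prod>j = i+1..s. (z i - z j))"

definition Jfun :: "nat \<Rightarrow> nat \<Rightarrow> (nat \<Rightarrow> complex) \<Rightarrow> complex" where
  "Jfun N s z =
     (\<Prod>j = 1..s. z j ^ (s - j) / (z j ^ s * (z j - 1) ^ (s - j + 1)))
   * (\<Prod>j = 1..s. \<Prod>k = j+1..s. (z j - z k) / (1 - z k + z j * z k))
   * hNs N s z"

definition res_var :: "nat \<Rightarrow> ((nat \<Rightarrow> complex) \<Rightarrow> complex) \<Rightarrow> (nat \<Rightarrow> complex) \<Rightarrow> complex" where
  "res_var j F = (\<lambda>z. residue (\<lambda>w. F (z(j := w))) 0)"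

fun ires :: "nat \<Rightarrow> ((nat \<Rightarrow> complex) \<Rightarrow> complex) \<Rightarrow> (nat \<Rightarrow> complex) \<Rightarrow> complex" where
  "ires 0 F = F"
| "ires (Suc k) F = ires k (res_var (Suc k) F)"

end

theory Submission
  imports Defs
begin

text \<open>
  Absorbing into column j of the determinant the part of the prefactor that depends on z_{j+1},
  the integrand becomes C_s(z) det A(z), where C_k is the product of 1/(1 - z_l + z_j z_l) over
  j < l <= k and column j of A depends on z_{j+1} alone. The residue in z_k of C_k F is C_{k-1}
  times the residue of F weighted by the factors of C_k that contain z_k. These weights are
  products of geometric series in z_k with coefficients powers of 1 - z_j, so finite sums of
  products of one-variable functions with poles at 0 keep this form, in one variable less.

  Expanding det A along its first column, the entries below the first row are regular at
  z_1 = 0 and stay so through the residues in z_s, ..., z_2, so the last residue kills these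
  terms. The first entry is h_N(z_1) / (z_1 (z_1 - 1)), with residue -h_N(0) because all weights
  are 1 at z_1 = 0, and its minor is a determinant of the same shape in z_2, ..., z_s built from
  h_{N-1}, ..., h_{N-s+1}. Induction on the size of such determinants in the variables
  z_{m+1}, ..., z_{m+s} gives the product.
\<close>

section \<open>The cross factors\<close>

definition cross_factor :: "complex \<Rightarrow> complex \<Rightarrow> complex" where
  "cross_factor u w = 1 / (1 - w + u * w)"

definition cross_prod :: "nat \<Rightarrow> (nat \<Rightarrow> complex) \<Rightarrow> complex" where
  "cross_prod k z = (\<Prod>j = 1..k. \<Prod>l = j+1..k. cross_factor (z j) (z l))"

definition cross_weight :: "nat \<Rightarrow> (nat \<Rightarrow> complex) \<Rightarrow> complex \<Rightarrow> complex" where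
  "cross_weight k z w = (\<Prod>j = 1..k. cross_factor (z j) w)"

lemma cross_prod_Suc:
  "cross_prod (Suc k) z = cross_prod k z * (\<Prod>j = 1..k. cross_factor (z j) (z (Suc k)))"
proof -
  have "cross_prod (Suc k) z = (\<Prod>j = 1..k. \<Prod>l = j+1..Suc k. cross_factor (z j) (z l))"
    unfolding cross_prod_def by (simp add: prod.cl_ivl_Suc)
  also have "\<dots> = (\<Prod>j = 1..k. (\<Prod>l = j+1..k. cross_factor (z j) (z l)) * cross_factor (z j) (z (Suc k)))"
    by (intro prod.cong refl) (simp add: prod.cl_ivl_Suc)
  finally show ?thesis
    unfolding cross_prod_def by (simp add: prod.distrib)
qed

lemma cross_prod_Suc_upd:
  "cross_prod (Suc k) (z(Suc k := w)) = cross_prod k z * cross_weight k z w"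
proof -
  have "cross_prod k (z(Suc k := w)) = cross_prod k z"
    unfolding cross_prod_def by (intro prod.cong refl) auto
  moreover have "(\<Prod>j = 1..k. cross_factor ((z(Suc k := w)) j) w) = cross_weight k z w"
    unfolding cross_weight_def by (intro prod.cong refl) auto
  ultimately show ?thesis by (simp add: cross_prod_Suc)
qed

lemma cross_weight_0 [simp]: "cross_weight k z 0 = 1"
  by (simp add: cross_weight_def cross_factor_def)

definition geom_fps :: "complex \<Rightarrow> complex fps" where
  "geom_fps a = Abs_fps (\<lambda>n. a ^ n)"

lemma geom_fps_inverse: "(1 - fps_const a * fps_X) * geom_fps a = 1"
proof (rule fps_ext)
  fix n
  show "fps_nth ((1 - fps_const a * fps_X) * geom_fps a) n = fps_nth 1 n"
    by (cases n) (simp_all add: algebra_simps mult.assoc fps_X_mult_nth geom_fps_def)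
qed

lemma cross_factor_has_fps_expansion: "cross_factor u has_fps_expansion geom_fps (1 - u)"
proof -
  have "(\<lambda>w. inverse (1 - (1 - u) * w)) has_fps_expansion inverse (1 - fps_const (1 - u) * fps_X)"
    by (intro fps_expansion_intros) auto
  also have "inverse (1 - fps_const (1 - u) * fps_X) = geom_fps (1 - u)"
    by (rule fps_inverse_unique[OF geom_fps_inverse])
  also have "(\<lambda>w. inverse (1 - (1 - u) * w)) = cross_factor u"
    by (auto simp: cross_factor_def divide_inverse algebra_simps)
  finally show ?thesis .
qed

lemma cross_weight_has_fps_expansion:
  "cross_weight k z has_fps_expansion (\<Prod>j = 1..k. geom_fps (1 - z j))"
  unfolding cross_weight_def by (intro has_fps_expansion_prod cross_factor_has_fps_expansion)

lemma cross_weight_holomorphic: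
  obtains U where "open U" "0 \<in> U" "cross_weight k z holomorphic_on U"
  by (rule has_fps_expansion_imp_holomorphic[OF cross_weight_has_fps_expansion]) (rule that)

section \<open>Poles of bounded order at 0\<close>

definition pole_order_le :: "nat \<Rightarrow> (complex \<Rightarrow> complex) \<Rightarrow> bool" where
  "pole_order_le K g \<longleftrightarrow>
     (\<exists>U \<phi>. open U \<and> 0 \<in> U \<and> \<phi> holomorphic_on U \<and> (\<forall>x \<in> U - {0}. g x = \<phi> x / x ^ K))"

lemma pole_order_le_holomorphic:
  "open U \<Longrightarrow> 0 \<in> U \<Longrightarrow> g holomorphic_on U \<Longrightarrow> pole_order_le 0 g"
  unfolding pole_order_le_def by auto

lemma pole_order_le_mult:
  assumes "pole_order_le K f" "pole_order_le L g"
  shows "pole_order_le (K + L) (\<lambda>x. f x * g x)"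
proof -
  obtain U \<phi> where U: "open U" "0 \<in> U" "\<phi> holomorphic_on U" "\<forall>x \<in> U - {0}. f x = \<phi> x / x ^ K"
    using assms(1) unfolding pole_order_le_def by blast
  obtain V \<psi> where V: "open V" "0 \<in> V" "\<psi> holomorphic_on V" "\<forall>x \<in> V - {0}. g x = \<psi> x / x ^ L"
    using assms(2) unfolding pole_order_le_def by blast
  have "(\<lambda>x. \<phi> x * \<psi> x) holomorphic_on U \<inter> V"
    using U(3) V(3) by (intro holomorphic_intros) (auto intro: holomorphic_on_subset)
  moreover have "f x * g x = \<phi> x * \<psi> x / x ^ (K + L)" if "x \<in> U \<inter> V - {0}" for x
    using that U(4) V(4) by (simp add: power_add)
  ultimately show ?thesis
    unfolding pole_order_le_def using U V
    by (intro exI[of _ "U \<inter> V"] exI[of _ "\<lambda>x. \<phi> x * \<psi> x"]) auto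
qed

lemma pole_order_le_imp_holomorphic:
  assumes "pole_order_le K g"
  obtains U where "open U" "0 \<in> U" "g holomorphic_on U - {0}"
proof -
  obtain U \<phi> where U: "open U" "0 \<in> U" "\<phi> holomorphic_on U" "\<forall>x \<in> U - {0}. g x = \<phi> x / x ^ K"
    using assms unfolding pole_order_le_def by blast
  have "(\<lambda>x. \<phi> x / x ^ K) holomorphic_on U - {0}"
    using U by (intro holomorphic_intros) (auto intro: holomorphic_on_subset)
  then have "g holomorphic_on U - {0}"
    using U(4) by (subst holomorphic_cong) auto
  with U show ?thesis using that by blast
qed

lemma residue_mult_fps_expansion:
  assumes "open U" "0 \<in> U" "\<phi> holomorphic_on U" "\<forall>x \<in> U - {0}. g x = \<phi> x / x ^ Suc n"
    and "c has_fps_expansion C"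
  shows "residue (\<lambda>w. g w * c w) 0 = fps_nth (fps_expansion \<phi> 0 * C) n"
proof -
  have "residue (\<lambda>w. g w * c w) 0 = residue (\<lambda>w. \<phi> w * c w / w ^ Suc n) 0"
    by (intro residue_cong eventually_mono[OF eventually_at_in_open[OF assms(1,2)]])
       (use assms(4) in auto)
  also have "\<dots> = fps_nth (fps_expansion \<phi> 0 * C) n"
    by (intro residue_fps_expansion_over_power_at_0 has_fps_expansion_mult assms(5)
          has_fps_expansion_fps_expansion[OF assms(1-3)])
  finally show ?thesis .
qed

lemma residue_mult_removable:
  assumes "pole_order_le 0 g" "c has_fps_expansion C"
  shows "residue (\<lambda>w. g w * c w) 0 = 0"
proof -
  obtain U \<phi> where U: "open U" "0 \<in> U" "\<phi> holomorphic_on U" "\<forall>x \<in> U - {0}. g x = \<phi> x"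
    using assms(1) unfolding pole_order_le_def by auto
  obtain S where S: "open S" "0 \<in> S" "c holomorphic_on S"
    by (rule has_fps_expansion_imp_holomorphic[OF assms(2)]) (rule that)
  have "residue (\<lambda>w. g w * c w) 0 = residue (\<lambda>w. \<phi> w * c w) 0"
    by (intro residue_cong eventually_mono[OF eventually_at_in_open[OF U(1,2)]]) (use U(4) in auto)
  also have "\<dots> = 0"
    using U S by (intro residue_holo[of "U \<inter> S"])
                 (auto intro!: holomorphic_intros intro: holomorphic_on_subset)
  finally show ?thesis .
qed

section \<open>Sums of products of one-variable functions\<close>

definition admissible :: "nat set \<Rightarrow> nat \<Rightarrow> (complex \<Rightarrow> complex) \<Rightarrow> bool" where
  "admissible V j g \<longleftrightarrow> (\<exists>K. pole_order_le K g) \<and> (j \<in> V \<longrightarrow> pole_order_le 0 g)"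

lemma admissible_holomorphic: "g holomorphic_on UNIV \<Longrightarrow> admissible V j g"
  unfolding admissible_def using pole_order_le_holomorphic[of UNIV g] by auto

lemma admissible_mult:
  "admissible V j f \<Longrightarrow> admissible V j g \<Longrightarrow> admissible V j (\<lambda>x. f x * g x)"
  unfolding admissible_def using pole_order_le_mult[of _ f _ g] by fastforce

inductive separable :: "nat set \<Rightarrow> nat \<Rightarrow> ((nat \<Rightarrow> complex) \<Rightarrow> complex) \<Rightarrow> bool"
  for V k where
  zero: "separable V k (\<lambda>z. 0)"
| prod: "(\<And>j. j \<in> {1..k} \<Longrightarrow> admissible V j (g j)) \<Longrightarrow> separable V k (\<lambda>z. a * (\<Prod>j = 1..k. g j (z j)))"
| add: "separable V k F \<Longrightarrow> separable V k G \<Longrightarrow> separable V k (\<lambda>z. F z + G z)"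

lemma separable_const: "separable V k (\<lambda>z. c)"
  using separable.prod[of k V "\<lambda>_ _. 1" c] by (simp add: admissible_holomorphic)

lemma separable_single:
  assumes "v \<in> {1..k}" "admissible V v \<phi>"
  shows "separable V k (\<lambda>z. \<phi> (z v))"
proof -
  let ?g = "\<lambda>j x. if j = v then \<phi> x else 1"
  have "separable V k (\<lambda>z. 1 * (\<Prod>j = 1..k. ?g j (z j)))"
  proof (intro separable.prod)
    fix j
    show "admissible V j (?g j)"
      using assms(2) by (cases "j = v") (simp_all add: admissible_holomorphic)
  qed
  moreover have "(\<Prod>j = 1..k. ?g j (z j)) = \<phi> (z v)" for z
    using assms(1) by (simp add: prod.delta)
  ultimately show ?thesis by simp
qed

lemma separable_sum:
  "finite I \<Longrightarrow> (\<And>i. i \<in> I \<Longrightarrow> separable V k (F i)) \<Longrightarrow> separable V k (\<lambda>z. \<Sum>i\<in>I. F i z)"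
proof (induction I rule: finite_induct)
  case empty
  then show ?case by (simp add: separable.zero)
next
  case (insert i I)
  then show ?case using separable.add[of V k "F i" "\<lambda>z. \<Sum>i\<in>I. F i z"] by simp
qed

lemma separable_mult:
  assumes "separable V k F" "separable V k G"
  shows "separable V k (\<lambda>z. F z * G z)"
  using assms(1)
proof (induction rule: separable.induct)
  case zero
  then show ?case by (simp add: separable.zero)
next
  case (prod f a)
  show ?case
    using assms(2)
  proof (induction rule: separable.induct)
    case zero
    then show ?case by (simp add: separable.zero)
  next
    case (prod g b)
    have "separable V k (\<lambda>z. (a * b) * (\<Prod>j = 1..k. f j (z j) * g j (z j)))"
      using prod.hyps \<open>\<And>j. j \<in> {1..k} \<Longrightarrow> admissible V j (f j)\<close>
      by (intro separable.prod admissible_mult)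
    then show ?case by (simp add: prod.distrib mult_ac)
  next
    case (add G1 G2)
    then show ?case by (simp add: distrib_left separable.add)
  qed
next
  case (add F1 F2)
  then show ?case by (simp add: distrib_right separable.add)
qed

lemma separable_det:
  assumes "c + n \<le> k" "\<And>i j. i < n \<Longrightarrow> j < n \<Longrightarrow> admissible V (Suc (c + j)) (E i j)"
  shows "separable V k (\<lambda>z. det (mat n n (\<lambda>(i, j). E i j (z (Suc (c + j))))))"
proof -
  let ?P = "{p. p permutes {0..<n}}"
  let ?g = "\<lambda>p v. if c < v \<and> v \<le> c + n then E (p (v - Suc c)) (v - Suc c) else (\<lambda>_. 1)"
  have det: "det (mat n n (\<lambda>(i, j). E i j (z (Suc (c + j))))) =
      (\<Sum>p \<in> ?P. signof p * (\<Prod>v = 1..k. ?g p v (z v)))" for z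
  proof -
    have "(\<Prod>j<n. E (p j) j (z (Suc (c + j)))) = (\<Prod>v = 1..k. ?g p v (z v))" for p
    proof -
      have "(\<Prod>v = 1..k. ?g p v (z v)) = (\<Prod>v = 0 + Suc c..<n + Suc c. ?g p v (z v))"
        using assms(1) by (intro prod.mono_neutral_right) auto
      also have "\<dots> = (\<Prod>j = 0..<n. E (p j) j (z (Suc (c + j))))"
        by (subst prod.shift_bounds_nat_ivl) (auto intro: prod.cong simp: add.commute)
      finally show ?thesis by (simp add: atLeast0LessThan)
    qed
    moreover have "p j < n" if "p \<in> ?P" "j < n" for p j
      using that permutes_in_image[of p "{0..<n}" j] by auto
    ultimately show ?thesis
      by (subst det_col[of _ n]) (auto intro!: sum.cong prod.cong)
  qed
  have "separable V k (\<lambda>z. \<Sum>p \<in> ?P. signof p * (\<Prod>v = 1..k. ?g p v (z v)))"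
  proof (intro separable_sum separable.prod)
    fix p v assume p: "p \<in> ?P" and v: "v \<in> {1..k}"
    show "admissible V v (?g p v)"
    proof (cases "c < v \<and> v \<le> c + n")
      case True
      then have "p (v - Suc c) < n" "Suc (c + (v - Suc c)) = v"
        using p permutes_in_image[of p "{0..<n}" "v - Suc c"] by auto
      then show ?thesis using True assms(2)[of "p (v - Suc c)" "v - Suc c"] by auto
    qed (auto intro: admissible_holomorphic)
  qed (simp add: finite_permutations)
  then show ?thesis by (simp only: det)
qed

lemma separable_upd_holomorphic:
  assumes "separable V k F" "i \<in> {1..k}"
  shows "\<exists>U. open U \<and> 0 \<in> U \<and> (\<lambda>w. F (z(i := w))) holomorphic_on U - {0}"
  using assms(1)
proof (induction rule: separable.induct)
  case zero
  then show ?case by (intro exI[of _ UNIV]) (auto intro: holomorphic_intros)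
next
  case (prod g a)
  obtain K where "pole_order_le K (g i)"
    using prod assms(2) by (auto simp: admissible_def)
  then obtain U where U: "open U" "0 \<in> U" "g i holomorphic_on U - {0}"
    by (rule pole_order_le_imp_holomorphic)
  have "(\<lambda>w. g j ((z(i := w)) j)) holomorphic_on U - {0}" for j
    using U(3) by (cases "j = i") (auto intro: holomorphic_intros)
  then have "(\<lambda>w. a * (\<Prod>j = 1..k. g j ((z(i := w)) j))) holomorphic_on U - {0}"
    by (intro holomorphic_intros)
  then show ?case using U by blast
next
  case (add F G)
  then obtain U1 U2 where U:
    "open U1" "0 \<in> U1" "(\<lambda>w. F (z(i := w))) holomorphic_on U1 - {0}"
    "open U2" "0 \<in> U2" "(\<lambda>w. G (z(i := w))) holomorphic_on U2 - {0}" by blast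
  have "(\<lambda>w. F (z(i := w)) + G (z(i := w))) holomorphic_on U1 \<inter> U2 - {0}"
    by (intro holomorphic_on_add holomorphic_on_subset[OF U(3)] holomorphic_on_subset[OF U(6)]) auto
  with U show ?case by blast
qed

lemma separable_geom_coeff:
  assumes "finite J" "J \<subseteq> {1..k}"
  shows "separable V k (\<lambda>z. fps_nth (H * (\<Prod>j \<in> J. geom_fps (1 - z j))) n)"
  using assms
proof (induction J arbitrary: n rule: finite_induct)
  case empty
  then show ?case by (simp add: separable_const)
next
  case (insert i J)
  let ?c = "\<lambda>z n. fps_nth (H * (\<Prod>j \<in> J. geom_fps (1 - z j))) n"
  have "fps_nth (H * (\<Prod>j \<in> insert i J. geom_fps (1 - z j))) n =
      (\<Sum>l = 0..n. (1 - z i) ^ l * ?c z (n - l))" for z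
  proof -
    have "fps_nth (H * (\<Prod>j \<in> insert i J. geom_fps (1 - z j))) n =
        fps_nth (geom_fps (1 - z i) * (H * (\<Prod>j \<in> J. geom_fps (1 - z j)))) n"
      using insert.hyps by (simp add: mult_ac)
    also have "\<dots> = (\<Sum>l = 0..n. fps_nth (geom_fps (1 - z i)) l * ?c z (n - l))"
      by (rule fps_mult_nth)
    finally show ?thesis by (simp add: geom_fps_def)
  qed
  moreover have "separable V k (\<lambda>z. \<Sum>l = 0..n. (1 - z i) ^ l * ?c z (n - l))"
    using insert
    by (intro separable_sum separable_mult separable_single admissible_holomorphic insert.IH)
       (auto intro!: holomorphic_intros)
  ultimately show ?case by simp
qed

section \<open>Weighted residues\<close>

definition weighted_res :: "nat \<Rightarrow> ((nat \<Rightarrow> complex) \<Rightarrow> complex) \<Rightarrow> (nat \<Rightarrow> complex) \<Rightarrow> complex" where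
  "weighted_res k F = (\<lambda>z. residue (\<lambda>w. F (z(k := w)) * cross_weight (k - 1) z w) 0)"

lemma weighted_res_integrand_holomorphic:
  assumes "separable V k F" "1 \<le> k"
  obtains U where "open U" "0 \<in> U"
    "(\<lambda>w. F (z(k := w)) * cross_weight (k - 1) z w) holomorphic_on U - {0}"
proof -
  obtain U1 where U1: "open U1" "0 \<in> U1" "(\<lambda>w. F (z(k := w))) holomorphic_on U1 - {0}"
    using separable_upd_holomorphic[OF assms(1), of k z] assms(2) by auto
  obtain U2 where U2: "open U2" "0 \<in> U2" "cross_weight (k - 1) z holomorphic_on U2"
    by (rule cross_weight_holomorphic)
  have "open (U1 \<inter> U2)" "0 \<in> U1 \<inter> U2"
    using U1 U2 by auto
  moreover have "(\<lambda>w. F (z(k := w)) * cross_weight (k - 1) z w) holomorphic_on U1 \<inter> U2 - {0}"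
    by (intro holomorphic_on_mult holomorphic_on_subset[OF U1(3)] holomorphic_on_subset[OF U2(3)]) auto
  ultimately show ?thesis by (rule that)
qed

lemma weighted_res_add:
  assumes "separable V k F" "separable W k G" "1 \<le> k"
  shows "weighted_res k (\<lambda>z. F z + G z) = (\<lambda>z. weighted_res k F z + weighted_res k G z)"
proof
  fix z
  obtain U1 where U1: "open U1" "0 \<in> U1"
    "(\<lambda>w. F (z(k := w)) * cross_weight (k - 1) z w) holomorphic_on U1 - {0}"
    using weighted_res_integrand_holomorphic[OF assms(1,3)] by blast
  obtain U2 where U2: "open U2" "0 \<in> U2"
    "(\<lambda>w. G (z(k := w)) * cross_weight (k - 1) z w) holomorphic_on U2 - {0}"
    using weighted_res_integrand_holomorphic[OF assms(2,3)] by blast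
  have "residue (\<lambda>w. F (z(k := w)) * cross_weight (k - 1) z w +
      G (z(k := w)) * cross_weight (k - 1) z w) 0 = weighted_res k F z + weighted_res k G z"
    unfolding weighted_res_def
    by (rule residue_add[of "U1 \<inter> U2", OF _ _ holomorphic_on_subset[OF U1(3)]
          holomorphic_on_subset[OF U2(3)]]) (use U1 U2 in auto)
  then show "weighted_res k (\<lambda>z. F z + G z) z = weighted_res k F z + weighted_res k G z"
    by (simp add: weighted_res_def distrib_right)
qed

lemma weighted_res_mult_left:
  assumes "separable V k F" "1 \<le> k" "\<And>z w. a (z(k := w)) = a z"
  shows "weighted_res k (\<lambda>z. a z * F z) = (\<lambda>z. a z * weighted_res k F z)"
proof
  fix z
  obtain U where "open U" "0 \<in> U"
    "(\<lambda>w. F (z(k := w)) * cross_weight (k - 1) z w) holomorphic_on U - {0}"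
    using weighted_res_integrand_holomorphic[OF assms(1,2)] by blast
  then have "residue (\<lambda>w. a z * (F (z(k := w)) * cross_weight (k - 1) z w)) 0 = a z * weighted_res k F z"
    unfolding weighted_res_def by (rule residue_lmul)
  then show "weighted_res k (\<lambda>z. a z * F z) z = a z * weighted_res k F z"
    by (simp add: weighted_res_def assms(3) mult.assoc)
qed

lemma weighted_res_prod:
  assumes "1 \<le> k" "pole_order_le K (g k)"
  shows "weighted_res k (\<lambda>z. a * (\<Prod>j = 1..k. g j (z j))) z =
    a * (\<Prod>j = 1..k - 1. g j (z j)) * residue (\<lambda>w. g k w * cross_weight (k - 1) z w) 0"
proof -
  obtain U1 where U1: "open U1" "0 \<in> U1" "g k holomorphic_on U1 - {0}"
    using assms(2) by (rule pole_order_le_imp_holomorphic)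
  obtain U2 where U2: "open U2" "0 \<in> U2" "cross_weight (k - 1) z holomorphic_on U2"
    by (rule cross_weight_holomorphic)
  have slice: "(\<Prod>j = 1..k. g j ((z(k := w)) j)) = (\<Prod>j = 1..k - 1. g j (z j)) * g k w" for w
  proof -
    obtain k' where k: "k = Suc k'" using assms(1) by (cases k) auto
    have "(\<Prod>j = 1..k'. g j ((z(Suc k' := w)) j)) = (\<Prod>j = 1..k'. g j (z j))"
      by (intro prod.cong) auto
    then show ?thesis unfolding k by (simp add: prod.cl_ivl_Suc)
  qed
  have "(\<lambda>w. g k w * cross_weight (k - 1) z w) holomorphic_on U1 \<inter> U2 - {0}"
    by (intro holomorphic_on_mult holomorphic_on_subset[OF U1(3)] holomorphic_on_subset[OF U2(3)]) auto
  then have "residue (\<lambda>w. (a * (\<Prod>j = 1..k - 1. g j (z j))) * (g k w * cross_weight (k - 1) z w)) 0 =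
      a * (\<Prod>j = 1..k - 1. g j (z j)) * residue (\<lambda>w. g k w * cross_weight (k - 1) z w) 0"
    by (rule residue_lmul[rotated 2]) (use U1 U2 in auto)
  then show ?thesis
    unfolding weighted_res_def by (simp only: slice mult.assoc)
qed

lemma separable_weighted_res:
  assumes "separable V k F" "1 \<le> k"
  shows "separable V (k - 1) (weighted_res k F)"
  using assms(1)
proof (induction rule: separable.induct)
  case zero
  then show ?case by (simp add: weighted_res_def residue_const separable.zero)
next
  case (prod g a)
  obtain K where K: "pole_order_le K (g k)"
    using prod.hyps assms(2) by (auto simp: admissible_def)
  then obtain U \<phi> where U: "open U" "0 \<in> U" "\<phi> holomorphic_on U" "\<forall>x \<in> U - {0}. g k x = \<phi> x / x ^ K"
    unfolding pole_order_le_def by blast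
  show ?case
  proof (cases K)
    case 0
    then have "weighted_res k (\<lambda>z. a * (\<Prod>j = 1..k. g j (z j))) = (\<lambda>z. 0)"
      using weighted_res_prod[of k K g a, OF assms(2) K] K
        residue_mult_removable[OF _ cross_weight_has_fps_expansion]
      by auto
    then show ?thesis by (simp add: separable.zero)
  next
    case (Suc n)
    let ?c = "\<lambda>z. fps_nth (fps_expansion \<phi> 0 * (\<Prod>j = 1..k - 1. geom_fps (1 - z j))) n"
    have "weighted_res k (\<lambda>z. a * (\<Prod>j = 1..k. g j (z j))) = (\<lambda>z. a * (\<Prod>j = 1..k - 1. g j (z j)) * ?c z)"
      using weighted_res_prod[of k K g a, OF assms(2) K] Suc
        residue_mult_fps_expansion[OF U(1-3) _ cross_weight_has_fps_expansion] U(4)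
      by auto
    moreover have "separable V (k - 1) (\<lambda>z. a * (\<Prod>j = 1..k - 1. g j (z j)) * ?c z)"
      using prod.hyps by (intro separable_mult separable.prod separable_geom_coeff) auto
    ultimately show ?thesis by simp
  qed
next
  case (add F G)
  then show ?case by (simp add: weighted_res_add[OF add.hyps(1,2) assms(2)] separable.add)
qed

lemma weighted_res_eq_0:
  assumes "separable V k F" "1 \<le> k" "k \<in> V"
  shows "weighted_res k F = (\<lambda>z. 0)"
  using assms(1)
proof (induction rule: separable.induct)
  case zero
  then show ?case by (simp add: weighted_res_def residue_const)
next
  case (prod g a)
  then have "pole_order_le 0 (g k)"
    using assms(2,3) by (auto simp: admissible_def)
  then show ?case
    using weighted_res_prod[of k 0 g a] assms(2)
      residue_mult_removable[OF _ cross_weight_has_fps_expansion]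
    by auto
next
  case (add F G)
  then show ?case by (simp add: weighted_res_add[OF add.hyps(1,2) assms(2)])
qed

lemma weighted_res_simple_pole:
  assumes "open U" "0 \<in> U" "\<phi> holomorphic_on U"
  shows "weighted_res (Suc m) (\<lambda>z. \<phi> (z (Suc m)) / z (Suc m)) = (\<lambda>z. \<phi> 0)"
proof
  fix z
  obtain S where S: "open S" "0 \<in> S" "cross_weight m z holomorphic_on S"
    by (rule cross_weight_holomorphic)
  have "weighted_res (Suc m) (\<lambda>z. \<phi> (z (Suc m)) / z (Suc m)) z =
      residue (\<lambda>w. \<phi> w * cross_weight m z w / (w - 0)) 0"
    unfolding weighted_res_def by (intro arg_cong2[where f = residue] ext) (simp_all add: mult_ac)
  also have "\<dots> = \<phi> 0 * cross_weight m z 0"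
  proof (rule residue_simple[of "U \<inter> S"])
    show "(\<lambda>w. \<phi> w * cross_weight m z w) holomorphic_on U \<inter> S"
      by (intro holomorphic_on_mult holomorphic_on_subset[OF assms(3)] holomorphic_on_subset[OF S(3)]) auto
  qed (use assms S in auto)
  finally show "weighted_res (Suc m) (\<lambda>z. \<phi> (z (Suc m)) / z (Suc m)) z = \<phi> 0" by simp
qed

fun weighted_ires :: "nat \<Rightarrow> nat \<Rightarrow> ((nat \<Rightarrow> complex) \<Rightarrow> complex) \<Rightarrow> (nat \<Rightarrow> complex) \<Rightarrow> complex" where
  "weighted_ires m 0 F = F"
| "weighted_ires m (Suc n) F = weighted_ires m n (weighted_res (m + Suc n) F)"

lemma separable_weighted_ires: "separable V (m + n) F \<Longrightarrow> separable V m (weighted_ires m n F)"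
proof (induction n arbitrary: F)
  case (Suc n)
  then show ?case using separable_weighted_res[of V "m + Suc n" F] by simp
qed simp

lemma weighted_ires_zero: "weighted_ires m n (\<lambda>z. 0) = (\<lambda>z. 0)"
  by (induction n) (simp_all add: weighted_res_def residue_const)

lemma weighted_ires_add:
  "separable V (m + n) F \<Longrightarrow> separable W (m + n) G \<Longrightarrow>
    weighted_ires m n (\<lambda>z. F z + G z) = (\<lambda>z. weighted_ires m n F z + weighted_ires m n G z)"
proof (induction n arbitrary: F G)
  case (Suc n)
  then show ?case
    using weighted_res_add[of V "m + Suc n" F W G] separable_weighted_res[of V "m + Suc n" F]
      separable_weighted_res[of W "m + Suc n" G] by simp
qed simp

lemma weighted_ires_sum:
  assumes "finite I" "\<And>i. i \<in> I \<Longrightarrow> separable V (m + n) (F i)"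
  shows "weighted_ires m n (\<lambda>z. \<Sum>i \<in> I. F i z) = (\<lambda>z. \<Sum>i \<in> I. weighted_ires m n (F i) z)"
  using assms
proof (induction I rule: finite_induct)
  case empty
  then show ?case by (simp add: weighted_ires_zero)
next
  case (insert i I)
  then show ?case
    using weighted_ires_add[of V m n "F i" V "\<lambda>z. \<Sum>i \<in> I. F i z"]
      separable_sum[of I V "m + n" F]
    by simp
qed

lemma weighted_ires_mult_left:
  "separable V (m + n) F \<Longrightarrow> (\<And>j z w. m < j \<Longrightarrow> a (z(j := w)) = a z) \<Longrightarrow>
    weighted_ires m n (\<lambda>z. a z * F z) = (\<lambda>z. a z * weighted_ires m n F z)"
proof (induction n arbitrary: F)
  case (Suc n)
  have "weighted_res (m + Suc n) (\<lambda>z. a z * F z) = (\<lambda>z. a z * weighted_res (m + Suc n) F z)"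
    using Suc.prems(1) by (rule weighted_res_mult_left) (simp_all add: Suc.prems(2))
  moreover have "separable V (m + n) (weighted_res (m + Suc n) F)"
    using separable_weighted_res[OF Suc.prems(1)] by simp
  ultimately show ?case
    using Suc.IH Suc.prems(2) by simp
qed simp

lemma weighted_ires_Suc_outer:
  "weighted_ires m (Suc n) F = weighted_res (Suc m) (weighted_ires (Suc m) n F)"
proof (induction n arbitrary: F)
  case (Suc n)
  then show ?case
    by (simp del: weighted_ires.simps(2)
             add: weighted_ires.simps(2)[of m "Suc n"] weighted_ires.simps(2)[of "Suc m" n])
qed simp

lemma weighted_ires_eq_0:
  assumes "separable V (m + Suc n) F" "Suc m \<in> V"
  shows "weighted_ires m (Suc n) F = (\<lambda>z. 0)"
proof -
  have "separable V (Suc m) (weighted_ires (Suc m) n F)"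
    using assms(1) by (intro separable_weighted_ires) simp
  then show ?thesis
    unfolding weighted_ires_Suc_outer using weighted_res_eq_0[OF _ _ assms(2)] by simp
qed

lemma res_var_cross_prod:
  assumes "separable V (Suc k) F"
  shows "res_var (Suc k) (\<lambda>z. cross_prod (Suc k) z * F z) =
    (\<lambda>z. cross_prod k z * weighted_res (Suc k) F z)"
proof
  fix z
  obtain U where "open U" "0 \<in> U"
    "(\<lambda>w. F (z(Suc k := w)) * cross_weight k z w) holomorphic_on U - {0}"
    using weighted_res_integrand_holomorphic[OF assms] by auto
  then have "residue (\<lambda>w. cross_prod k z * (F (z(Suc k := w)) * cross_weight k z w)) 0 =
      cross_prod k z * weighted_res (Suc k) F z"
    unfolding weighted_res_def by (simp add: residue_lmul)
  then show "res_var (Suc k) (\<lambda>z. cross_prod (Suc k) z * F z) z =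
      cross_prod k z * weighted_res (Suc k) F z"
    by (simp add: res_var_def cross_prod_Suc_upd mult_ac)
qed

lemma ires_cross_prod:
  "separable V k F \<Longrightarrow> ires k (\<lambda>z. cross_prod k z * F z) = weighted_ires 0 k F"
proof (induction k arbitrary: F)
  case 0
  then show ?case by (simp add: cross_prod_def)
next
  case (Suc k)
  then show ?case
    using res_var_cross_prod[of V k F] Suc.IH[of "weighted_res (Suc k) F"]
      separable_weighted_res[of V "Suc k" F]
    by simp
qed

definition generic_point :: "nat \<Rightarrow> (nat \<Rightarrow> complex) \<Rightarrow> bool" where
  "generic_point k z \<longleftrightarrow> (\<forall>i \<in> {1..k}. z i \<noteq> 0 \<and> z i \<noteq> 1 \<and> (\<forall>j \<in> {1..k}. i \<noteq> j \<longrightarrow> z i \<noteq> z j))"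

lemma eventually_generic_point_upd:
  assumes "generic_point k z"
  shows "\<forall>\<^sub>F w in at 0. generic_point (Suc k) (z(Suc k := w))"
proof -
  let ?A = "insert 1 (z ` {1..k})"
  have "closed ?A" by (intro finite_imp_closed) simp
  moreover have "0 \<notin> ?A" using assms by (auto simp: generic_point_def)
  ultimately have "\<forall>\<^sub>F w in at 0. w \<in> - ?A - {0}"
    by (intro eventually_at_in_open) auto
  then show ?thesis
  proof eventually_elim
    case (elim w)
    then have "w \<noteq> 0" "w \<noteq> 1" "\<forall>i \<in> {1..k}. w \<noteq> z i" by auto
    with assms show ?case by (auto simp: generic_point_def le_Suc_eq)
  qed
qed

lemma ires_cong_generic:
  "(\<And>z. generic_point k z \<Longrightarrow> F z = G z) \<Longrightarrow> ires k F = ires k G"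
proof (induction k arbitrary: F G)
  case 0
  have "F = G"
    by (rule ext, rule 0) (simp add: generic_point_def)
  then show ?case by simp
next
  case (Suc k)
  have "res_var (Suc k) F z = res_var (Suc k) G z" if "generic_point k z" for z
  proof -
    have "\<forall>\<^sub>F w in at 0. F (z(Suc k := w)) = G (z(Suc k := w))"
      using eventually_generic_point_upd[OF that] by eventually_elim (rule Suc.prems)
    then show ?thesis
      unfolding res_var_def by (rule residue_cong) simp
  qed
  then show ?case
    using Suc.IH[of "res_var (Suc k) F" "res_var (Suc k) G"] by simp
qed

section \<open>The scaled determinant\<close>

text \<open>
  Entry (i, j) of the matrix in hNs times the factor 1 / (x^{j+1} (x - 1)^{s-j}) that the
  prefactor of the integrand contributes to column j, where x = z_{j+1} and h i = h_{N-i}.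
\<close>
definition scaled_entry :: "nat \<Rightarrow> (nat \<Rightarrow> complex \<Rightarrow> complex) \<Rightarrow> nat \<Rightarrow> nat \<Rightarrow> complex \<Rightarrow> complex" where
  "scaled_entry s h i j x = (x - 1) ^ (s - Suc i) * x ^ i * h i x / (x ^ Suc j * (x - 1) ^ (s - j))"

definition scaled_mat :: "nat \<Rightarrow> nat \<Rightarrow> (nat \<Rightarrow> complex \<Rightarrow> complex) \<Rightarrow> (nat \<Rightarrow> complex) \<Rightarrow> complex mat" where
  "scaled_mat m s h z = mat s s (\<lambda>(i, j). scaled_entry s h i j (z (Suc (m + j))))"

lemma scaled_entry_Suc_Suc:
  "scaled_entry (Suc s) h (Suc i) (Suc j) x = scaled_entry s (\<lambda>i. h (Suc i)) i j x"
proof (cases "x = 0")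
  case True
  then show ?thesis by (simp add: scaled_entry_def)
next
  case False
  have "scaled_entry (Suc s) h (Suc i) (Suc j) x =
      (x * ((x - 1) ^ (s - Suc i) * x ^ i * h (Suc i) x)) / (x * (x ^ Suc j * (x - 1) ^ (s - j)))"
    unfolding scaled_entry_def by (simp add: mult_ac)
  also have "\<dots> = scaled_entry s (\<lambda>i. h (Suc i)) i j x"
    unfolding scaled_entry_def using False by (rule mult_divide_mult_cancel_left)
  finally show ?thesis .
qed

lemma scaled_entry_0_0: "scaled_entry (Suc s) h 0 0 x = h 0 x / (x - 1) / x"
proof (cases "x = 0 \<or> x = 1")
  case True
  then show ?thesis by (auto simp: scaled_entry_def)
next
  case False
  then have "x \<noteq> 0" "x - 1 \<noteq> 0" by auto
  then show ?thesis by (simp add: scaled_entry_def field_simps)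
qed

lemma pole_order_le_scaled_entry:
  assumes "h i holomorphic_on UNIV"
  shows "pole_order_le (Suc j - i) (scaled_entry s h i j)"
  unfolding pole_order_le_def
proof (intro exI conjI)
  let ?U = "- {1 :: complex}"
  let ?\<phi> = "\<lambda>x. (x - 1) ^ (s - Suc i) * x ^ (i - Suc j) * h i x / (x - 1) ^ (s - j)"
  show "open ?U" "0 \<in> ?U" by auto
  show "?\<phi> holomorphic_on ?U"
    by (intro holomorphic_intros holomorphic_on_subset[OF assms]) auto
  show "\<forall>x \<in> ?U - {0}. scaled_entry s h i j x = ?\<phi> x / x ^ (Suc j - i)"
  proof
    fix x assume x: "x \<in> ?U - {0}"
    have "i + (Suc j - i) = (i - Suc j) + Suc j" by arith
    then have "x ^ i * x ^ (Suc j - i) = x ^ (i - Suc j) * x ^ Suc j"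
      by (simp flip: power_add)
    moreover have "x \<noteq> 0" "x - 1 \<noteq> 0" using x by auto
    ultimately show "scaled_entry s h i j x = ?\<phi> x / x ^ (Suc j - i)"
      unfolding scaled_entry_def by (simp add: field_simps)
  qed
qed

lemma admissible_scaled_entry:
  assumes "h i holomorphic_on UNIV" "v \<in> V \<Longrightarrow> j < i"
  shows "admissible V v (scaled_entry s h i j)"
  using pole_order_le_scaled_entry[of h i j s, OF assms(1)] assms(2) unfolding admissible_def by auto

lemma separable_det_scaled_mat:
  assumes "\<And>i. h i holomorphic_on UNIV"
  shows "separable {} (m + s) (\<lambda>z. det (scaled_mat m s h z))"
  unfolding scaled_mat_def by (intro separable_det admissible_scaled_entry assms) auto

lemma mat_delete_scaled_mat:
  "mat_delete (scaled_mat m (Suc s) h z) i 0 =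
    mat s s (\<lambda>(i', j). scaled_entry (Suc s) h (if i' < i then i' else Suc i') (Suc j) (z (Suc (Suc m + j))))"
  by (rule eq_matI) (auto simp: mat_delete_def scaled_mat_def)

lemma det_scaled_mat_laplace:
  "det (scaled_mat m (Suc s) h z) =
    (\<Sum>i < Suc s. (-1) ^ i * scaled_entry (Suc s) h i 0 (z (Suc m)) *
       det (mat_delete (scaled_mat m (Suc s) h z) i 0))"
  by (subst laplace_expansion_column[of _ "Suc s" 0])
     (auto simp: scaled_mat_def cofactor_def intro!: sum.cong)

lemma weighted_ires_first_entry:
  assumes "separable V (Suc m + s) D" "weighted_ires (Suc m) s D = (\<lambda>z. C)" "h 0 holomorphic_on UNIV"
  shows "weighted_ires m (Suc s) (\<lambda>z. scaled_entry (Suc s) h 0 0 (z (Suc m)) * D z) = (\<lambda>z. - h 0 0 * C)"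
proof -
  have "weighted_ires (Suc m) s (\<lambda>z. scaled_entry (Suc s) h 0 0 (z (Suc m)) * D z) =
      (\<lambda>z. C * h 0 (z (Suc m)) / (z (Suc m) - 1) / z (Suc m))"
    using assms(1,2) by (subst weighted_ires_mult_left) (auto simp: scaled_entry_0_0)
  moreover have "weighted_res (Suc m) (\<lambda>z. C * h 0 (z (Suc m)) / (z (Suc m) - 1) / z (Suc m)) =
      (\<lambda>z. C * h 0 0 / (0 - 1))"
    by (rule weighted_res_simple_pole[of "- {1}"])
       (auto intro!: holomorphic_intros holomorphic_on_subset[OF assms(3)])
  ultimately show ?thesis
    unfolding weighted_ires_Suc_outer by (simp add: mult.commute)
qed

lemma weighted_ires_det_scaled_mat:
  assumes "\<And>i. h i holomorphic_on UNIV"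
  shows "weighted_ires m s (\<lambda>z. det (scaled_mat m s h z)) = (\<lambda>z. (-1) ^ s * (\<Prod>i < s. h i 0))"
  using assms
proof (induction s arbitrary: m h)
  case 0
  have "det (scaled_mat m 0 h z) = 1" for z
    by (rule det_dim_zero) (simp add: scaled_mat_def)
  then show ?case by simp
next
  case (Suc s)
  define T where "T i z = (-1) ^ i * scaled_entry (Suc s) h i 0 (z (Suc m)) *
      det (mat_delete (scaled_mat m (Suc s) h z) i 0)" for i z
  have sep_T: "separable V (m + Suc s) (T i)" if "V \<subseteq> {Suc m}" "Suc m \<in> V \<Longrightarrow> 0 < i" for V i
    unfolding T_def mat_delete_scaled_mat using that
    by (intro separable_mult separable_const separable_single separable_det
          admissible_scaled_entry Suc.prems) auto
  \<comment> \<open>below the first row, the entries of the first column are regular at 0\<close>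
  have vanish: "weighted_ires m (Suc s) (T i) = (\<lambda>z. 0)" if "0 < i" for i
    using sep_T[of "{Suc m}" i] that by (intro weighted_ires_eq_0) auto
  define h' where "h' = (\<lambda>i. h (Suc i))"
  define C where "C = (-1) ^ s * (\<Prod>i < s. h' i 0)"
  have T0_eq: "T 0 = (\<lambda>z. scaled_entry (Suc s) h 0 0 (z (Suc m)) * det (scaled_mat (Suc m) s h' z))"
    unfolding T_def mat_delete_scaled_mat by (simp add: scaled_mat_def h'_def scaled_entry_Suc_Suc)
  have "separable {} (Suc m + s) (\<lambda>z. det (scaled_mat (Suc m) s h' z))"
    by (rule separable_det_scaled_mat) (simp add: h'_def Suc.prems)
  moreover have "weighted_ires (Suc m) s (\<lambda>z. det (scaled_mat (Suc m) s h' z)) = (\<lambda>z. C)"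
    unfolding C_def by (rule Suc.IH) (simp add: h'_def Suc.prems)
  ultimately have T0: "weighted_ires m (Suc s) (T 0) = (\<lambda>z. - h 0 0 * C)"
    unfolding T0_eq by (rule weighted_ires_first_entry[OF _ _ Suc.prems])
  have "weighted_ires m (Suc s) (\<lambda>z. det (scaled_mat m (Suc s) h z)) =
      (\<lambda>z. \<Sum>i < Suc s. weighted_ires m (Suc s) (T i) z)"
    unfolding det_scaled_mat_laplace T_def[symmetric] using sep_T[of "{}"]
    by (intro weighted_ires_sum) auto
  also have "\<dots> = (\<lambda>z. - h 0 0 * C)"
  proof
    fix z
    have "(\<Sum>i < Suc s. weighted_ires m (Suc s) (T i) z) =
        weighted_ires m (Suc s) (T 0) z + (\<Sum>i < s. weighted_ires m (Suc s) (T (Suc i)) z)"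
      by (rule sum.lessThan_Suc_shift)
    then show "(\<Sum>i < Suc s. weighted_ires m (Suc s) (T i) z) = - h 0 0 * C"
      using T0 vanish by (simp del: weighted_ires.simps)
  qed
  also have "\<dots> = (\<lambda>z. (-1) ^ Suc s * (\<Prod>i < Suc s. h i 0))"
    unfolding C_def h'_def prod.lessThan_Suc_shift by (simp add: mult.left_commute)
  finally show ?case .
qed

lemma det_mat_mult_cols:
  "det (mat n n (\<lambda>(i, j). f i j * d j)) = (\<Prod>j < n. d j) * det (mat n n (\<lambda>(i, j). f i j))"
proof -
  have det: "det (mat n n (\<lambda>(i, j). g i j)) = (\<Sum>p | p permutes {0..<n}. signof p * (\<Prod>j < n. g (p j) j))"
    for g :: "nat \<Rightarrow> nat \<Rightarrow> 'a :: comm_ring_1"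
  proof -
    have "p j < n" if "p permutes {0..<n}" "j < n" for p j
      using permutes_in_image[OF that(1)] that(2) by auto
    then show ?thesis
      by (subst det_col[of _ n]) (auto intro!: sum.cong prod.cong)
  qed
  show ?thesis
    unfolding det[of "\<lambda>i j. f i j * d j"] det[of f]
    by (simp add: sum_distrib_left prod.distrib mult_ac)
qed

lemma hN_holomorphic: "hN n holomorphic_on UNIV"
  unfolding hN_def[abs_def] by (intro holomorphic_intros)

lemma Jfun_prefactor_eq:
  assumes "generic_point s z"
  shows "(\<Prod>j = 1..s. z j ^ (s - j) / (z j ^ s * (z j - 1) ^ (s - j + 1))) =
    (\<Prod>j < s. 1 / (z (Suc j) ^ Suc j * (z (Suc j) - 1) ^ (s - j)))"
proof -
  have "(\<Prod>j = 1..s. z j ^ (s - j) / (z j ^ s * (z j - 1) ^ (s - j + 1))) =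
      (\<Prod>j < s. z (Suc j) ^ (s - Suc j) / (z (Suc j) ^ s * (z (Suc j) - 1) ^ (s - Suc j + 1)))"
    by (simp add: prod.atLeast1_atMost_eq)
  also have "\<dots> = (\<Prod>j < s. 1 / (z (Suc j) ^ Suc j * (z (Suc j) - 1) ^ (s - j)))"
  proof (rule prod.cong[OF refl])
    fix j assume j: "j \<in> {..<s}"
    have nz: "z (Suc j) \<noteq> 0" "z (Suc j) - 1 \<noteq> 0"
      using assms j by (auto simp: generic_point_def)
    have e1: "s - Suc j + 1 = s - j" using j by auto
    have e2: "z (Suc j) ^ s = z (Suc j) ^ (s - Suc j) * z (Suc j) ^ Suc j"
    proof -
      have "s = (s - Suc j) + Suc j" using j by simp
      then show ?thesis by (metis power_add)
    qed
    show "z (Suc j) ^ (s - Suc j) / (z (Suc j) ^ s * (z (Suc j) - 1) ^ (s - Suc j + 1)) =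
        1 / (z (Suc j) ^ Suc j * (z (Suc j) - 1) ^ (s - j))"
      unfolding e1 e2 using nz by (simp add: field_simps)
  qed
  finally show ?thesis .
qed

lemma cross_ratio_prod_eq:
  "(\<Prod>j = 1..s. \<Prod>k = j+1..s. (z j - z k) / (1 - z k + z j * z k)) =
    (\<Prod>j = 1..s. \<Prod>k = j+1..s. (z j - z k)) * cross_prod s z"
  unfolding cross_prod_def cross_factor_def by (simp add: prod.distrib[symmetric])

lemma vandermonde_nonzero:
  assumes "generic_point s z"
  shows "(\<Prod>j = 1..s. \<Prod>k = j+1..s. (z j - z k)) \<noteq> 0"
  using assms unfolding generic_point_def by (simp add: prod_zero_iff)

lemma det_scaled_mat_hN:
  "det (scaled_mat 0 s (\<lambda>i. hN (N - i)) z) =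
    (\<Prod>j < s. 1 / (z (Suc j) ^ Suc j * (z (Suc j) - 1) ^ (s - j))) *
    det (mat s s (\<lambda>(i, j). (z (j+1) - 1) ^ (s - (i+1)) * z (j+1) ^ i * hN (N - i) (z (j+1))))"
proof -
  have "scaled_mat 0 s (\<lambda>i. hN (N - i)) z = mat s s (\<lambda>(i, j).
      (z (j+1) - 1) ^ (s - (i+1)) * z (j+1) ^ i * hN (N - i) (z (j+1)) *
      (1 / (z (Suc j) ^ Suc j * (z (Suc j) - 1) ^ (s - j))))"
    unfolding scaled_mat_def scaled_entry_def by (intro cong_mat) auto
  then show ?thesis by (simp only: det_mat_mult_cols)
qed

lemma Jfun_eq_cross_prod_det:
  assumes "generic_point s z"
  shows "Jfun N s z = cross_prod s z * det (scaled_mat 0 s (\<lambda>i. hN (N - i)) z)"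
  using vandermonde_nonzero[OF assms]
  unfolding Jfun_def hNs_def Jfun_prefactor_eq[OF assms] cross_ratio_prod_eq det_scaled_mat_hN
  by simp

theorem lemma2:
  fixes N s :: nat
  assumes "1 \<le> N" and "1 \<le> s" and "s \<le> N"
  shows "ires s (Jfun N s) (\<lambda>_. 0) = (-1) ^ s * (\<Prod>i = 0..<s. hN (N - i) 0)"
proof -
  define h where "h = (\<lambda>i. hN (N - i))"
  have h: "h i holomorphic_on UNIV" for i
    unfolding h_def by (rule hN_holomorphic)
  have "separable {} s (\<lambda>z. det (scaled_mat 0 s h z))"
    using separable_det_scaled_mat[of h 0 s] h by simp
  then have "ires s (\<lambda>z. cross_prod s z * det (scaled_mat 0 s h z)) =
      weighted_ires 0 s (\<lambda>z. det (scaled_mat 0 s h z))"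
    by (rule ires_cross_prod)
  also have "\<dots> = (\<lambda>z. (-1) ^ s * (\<Prod>i < s. h i 0))"
    by (rule weighted_ires_det_scaled_mat[OF h])
  also have "ires s (\<lambda>z. cross_prod s z * det (scaled_mat 0 s h z)) = ires s (Jfun N s)"
    by (rule ires_cong_generic) (simp add: Jfun_eq_cross_prod_det h_def)
  finally show ?thesis
    by (simp add: h_def atLeast0LessThan)
qed

end
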